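(* Let $\phi:A\to B$ be a surjective ring homomorphism. If $A$ is a Prüfer ring and $\mathrm{Ker}(\phi)$ is a regular ideal of $A$, then $\mathfrak a(\mathfrak b\cap\mathfrak c)=\mathfrak a\mathfrak b\cap\mathfrak a\mathfrak c$ for all ideals $\mathfrak a,\mathfrak b,\mathfrak c$ of $B$. In particular, $B$ is a Prüfer ring.
   Context: All rings are commutative with identity. An ideal is regular if it contains a non-zerodivisor. A ring is a Prüfer ring if every regular finitely generated ideal is invertible. *)

theory Defs
  imports Main
begin

definition is_ideal :: "'a::comm_ring_1 set \<Rightarrow> bool" where
  "is_ideal I \<longleftrightarrow> 0 \<in> I \<and> (\<forall>x\<in>I. \<forall>y\<in>I. x + y \<in> I) \<and> (\<forall>r. \<forall>x\<in>I. r * x \<in> I)"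

definition ideal_gen :: "'a::comm_ring_1 set \<Rightarrow> 'a set" where
  "ideal_gen S = \<Inter>{K. is_ideal K \<and> S \<subseteq> K}"

definition ideal_mult :: "'a::comm_ring_1 set \<Rightarrow> 'a set \<Rightarrow> 'a set" where
  "ideal_mult I J = ideal_gen {a * b | a b. a \<in> I \<and> b \<in> J}"

definition nonzerodivisor :: "'a::comm_ring_1 \<Rightarrow> bool" where
  "nonzerodivisor x \<longleftrightarrow> (\<forall>y. x * y = 0 \<longrightarrow> y = 0)"

definition regular_ideal :: "'a::comm_ring_1 set \<Rightarrow> bool" where
  "regular_ideal I \<longleftrightarrow> is_ideal I \<and> (\<exists>x\<in>I. nonzerodivisor x)"

definition fin_gen_ideal :: "'a::comm_ring_1 set \<Rightarrow> bool" where
  "fin_gen_ideal I \<longleftrightarrow> (\<exists>S. finite S \<and> I = ideal_gen S)"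

(* I is invertible: there is a fractional ideal J' (an A-submodule of the total
   quotient ring with d J' \<subseteq> A for some non-zerodivisor d) with I J' = A.
   Writing J = d J' (an ordinary ideal of A) this says exactly I J = d A. *)
definition invertible_ideal :: "'a::comm_ring_1 set \<Rightarrow> bool" where
  "invertible_ideal I \<longleftrightarrow> is_ideal I \<and>
     (\<exists>J d. is_ideal J \<and> nonzerodivisor d \<and> ideal_mult I J = {d * r | r. True})"

definition prufer_ring :: "'a::comm_ring_1 itself \<Rightarrow> bool" where
  "prufer_ring _ \<longleftrightarrow>
     (\<forall>I::'a set. regular_ideal I \<and> fin_gen_ideal I \<longrightarrow> invertible_ideal I)"

definition ring_hom_fun :: "('a::comm_ring_1 \<Rightarrow> 'b::comm_ring_1) \<Rightarrow> bool" where
  "ring_hom_fun f \<longleftrightarrow> f 1 = 1 \<and> (\<forall>x y. f (x + y) = f x + f y) \<and> (\<forall>x y. f (x * y) = f x * f y)"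

end

theory Submission
  imports Defs
begin

text \<open>
  Let \<open>K = Ker \<phi>\<close> and let \<open>I, J, L\<close> be the preimages of \<open>\<aa>, \<bb>, \<cc>\<close>; all contain \<open>K\<close>, so they
  are regular. Two consequences of the Prufer property, both proved by multiplying with the
  inverse of a suitable finitely generated regular ideal and cancelling the non-zerodivisor,
  give \<open>IJ \<inter> (IL + K) \<subseteq> I(J \<inter> L) + K\<close>: first \<open>X \<inter> (Y + Z) \<subseteq> X \<inter> Y + X \<inter> Z\<close> for regular \<open>Z\<close>,
  then \<open>IJ \<inter> IL = I(J \<inter> L)\<close> for regular \<open>I\<close>. Applying \<open>\<phi>\<close> yields the distributive law in \<open>B\<close>.
  For a regular finitely generated ideal \<open>\<aa>\<close> of \<open>B\<close> containing the non-zerodivisor \<open>s\<close>, lift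
  it to a regular finitely generated ideal \<open>I\<close> of \<open>A\<close> and \<open>s\<close> to \<open>s' \<in> I\<close>. Invertibility of \<open>I\<close>
  gives \<open>s' \<in> I (s'A : I)\<close>; its image \<open>s \<in> \<aa> (sB : \<aa>)\<close> says that \<open>\<aa>\<close> is invertible.
\<close>

abbreviation principal :: "'a::comm_ring_1 \<Rightarrow> 'a set" where
  "principal d \<equiv> {d * r | r. True}"

definition ideal_sum :: "'a::comm_ring_1 set \<Rightarrow> 'a set \<Rightarrow> 'a set" where
  "ideal_sum I J = {x + y | x y. x \<in> I \<and> y \<in> J}"

definition ideal_colon :: "'a::comm_ring_1 set \<Rightarrow> 'a set \<Rightarrow> 'a set" where
  "ideal_colon K I = {b. \<forall>q\<in>I. b * q \<in> K}"

lemma is_idealI: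
  assumes "0 \<in> I" "\<And>x y. x \<in> I \<Longrightarrow> y \<in> I \<Longrightarrow> x + y \<in> I" "\<And>r x. x \<in> I \<Longrightarrow> r * x \<in> I"
  shows "is_ideal I"
  using assms unfolding is_ideal_def by blast

lemma ideal_closed_zero: "is_ideal I \<Longrightarrow> 0 \<in> I"
  unfolding is_ideal_def by blast

lemma ideal_closed_add: "is_ideal I \<Longrightarrow> x \<in> I \<Longrightarrow> y \<in> I \<Longrightarrow> x + y \<in> I"
  unfolding is_ideal_def by blast

lemma ideal_closed_mult_left: "is_ideal I \<Longrightarrow> x \<in> I \<Longrightarrow> r * x \<in> I"
  unfolding is_ideal_def by blast

lemma ideal_closed_mult_right: "is_ideal I \<Longrightarrow> x \<in> I \<Longrightarrow> x * r \<in> I"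
  by (metis ideal_closed_mult_left mult.commute)

lemma is_ideal_inter: "is_ideal I \<Longrightarrow> is_ideal J \<Longrightarrow> is_ideal (I \<inter> J)"
  unfolding is_ideal_def by blast

lemma is_ideal_ideal_sum:
  assumes I: "is_ideal I" and J: "is_ideal J"
  shows "is_ideal (ideal_sum I J)"
proof (rule is_idealI)
  show "0 \<in> ideal_sum I J"
    unfolding ideal_sum_def using I J ideal_closed_zero by force
next
  fix x y assume "x \<in> ideal_sum I J" "y \<in> ideal_sum I J"
  then obtain x1 x2 y1 y2 where "x = x1 + x2" "y = y1 + y2" "x1 \<in> I" "x2 \<in> J" "y1 \<in> I" "y2 \<in> J"
    unfolding ideal_sum_def by blast
  then have "x + y = (x1 + y1) + (x2 + y2)" "x1 + y1 \<in> I" "x2 + y2 \<in> J"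
    using I J ideal_closed_add by (auto simp: algebra_simps)
  then show "x + y \<in> ideal_sum I J"
    unfolding ideal_sum_def by blast
next
  fix r x assume "x \<in> ideal_sum I J"
  then obtain x1 x2 where "x = x1 + x2" "x1 \<in> I" "x2 \<in> J"
    unfolding ideal_sum_def by blast
  then have "r * x = r * x1 + r * x2" "r * x1 \<in> I" "r * x2 \<in> J"
    using I J by (simp_all add: distrib_left ideal_closed_mult_left)
  then show "r * x \<in> ideal_sum I J"
    unfolding ideal_sum_def by blast
qed

lemma ideal_sum_mono: "I \<subseteq> I' \<Longrightarrow> J \<subseteq> J' \<Longrightarrow> ideal_sum I J \<subseteq> ideal_sum I' J'"
  unfolding ideal_sum_def by blast

lemma ideal_sum_upper_left: "is_ideal J \<Longrightarrow> I \<subseteq> ideal_sum I J"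
  unfolding ideal_sum_def by (force dest: ideal_closed_zero)

lemma ideal_sum_upper_right: "is_ideal I \<Longrightarrow> J \<subseteq> ideal_sum I J"
  unfolding ideal_sum_def by (force dest: ideal_closed_zero)

lemma is_ideal_principal: "is_ideal (principal d)"
proof (rule is_idealI)
  have "0 = d * 0" by simp
  then show "0 \<in> principal d" by blast
next
  fix x y assume "x \<in> principal d" "y \<in> principal d"
  then obtain r s where "x = d * r" "y = d * s" by blast
  then have "x + y = d * (r + s)" by (simp add: distrib_left)
  then show "x + y \<in> principal d" by blast
next
  fix r x assume "x \<in> principal d"
  then obtain s where "x = d * s" by blast
  then have "r * x = d * (r * s)" by (simp add: mult.left_commute)
  then show "r * x \<in> principal d" by blast
qed

lemma is_ideal_scaled:
  assumes K: "is_ideal K"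
  shows "is_ideal ((*) d ` K)"
proof (rule is_idealI)
  have "0 = d * 0" by simp
  then show "0 \<in> (*) d ` K" using K ideal_closed_zero by blast
next
  fix x y assume "x \<in> (*) d ` K" "y \<in> (*) d ` K"
  then obtain a b where "x = d * a" "y = d * b" "a \<in> K" "b \<in> K" by blast
  then have "x + y = d * (a + b)" "a + b \<in> K" using K ideal_closed_add by (simp_all add: distrib_left)
  then show "x + y \<in> (*) d ` K" by blast
next
  fix r x assume "x \<in> (*) d ` K"
  then obtain a where "x = d * a" "a \<in> K" by blast
  then have "r * x = d * (r * a)" "r * a \<in> K"
    using K ideal_closed_mult_left by (simp_all add: mult.left_commute)
  then show "r * x \<in> (*) d ` K" by blast
qed

lemma is_ideal_vimage_mult:
  assumes K: "is_ideal K"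
  shows "is_ideal ((\<lambda>z. z * x) -` K)"
  using K by (intro is_idealI)
    (simp_all add: distrib_right mult.assoc ideal_closed_zero ideal_closed_add ideal_closed_mult_left)

lemma is_ideal_ideal_colon:
  assumes K: "is_ideal K"
  shows "is_ideal (ideal_colon K I)"
  using K unfolding ideal_colon_def
  by (intro is_idealI)
    (simp_all add: distrib_right mult.assoc ideal_closed_zero ideal_closed_add ideal_closed_mult_left)

lemma is_ideal_ideal_gen: "is_ideal (ideal_gen S)"
  unfolding ideal_gen_def is_ideal_def by auto

lemma ideal_gen_subset: "S \<subseteq> ideal_gen S"
  unfolding ideal_gen_def by auto

lemma ideal_gen_least: "is_ideal K \<Longrightarrow> S \<subseteq> K \<Longrightarrow> ideal_gen S \<subseteq> K"
  unfolding ideal_gen_def by auto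

lemma ideal_gen_mono: "S \<subseteq> T \<Longrightarrow> ideal_gen S \<subseteq> ideal_gen T"
  by (meson ideal_gen_least ideal_gen_subset is_ideal_ideal_gen order_trans)

lemma ideal_gen_idem: "is_ideal I \<Longrightarrow> ideal_gen I = I"
  by (simp add: ideal_gen_least ideal_gen_subset subset_antisym)

lemma ideal_gen_insert_zero: "ideal_gen (insert 0 S) = ideal_gen S"
  by (meson ideal_closed_zero ideal_gen_least ideal_gen_mono ideal_gen_subset insert_subset
      is_ideal_ideal_gen subset_antisym subset_insertI)

lemma is_ideal_ideal_mult: "is_ideal (ideal_mult I J)"
  unfolding ideal_mult_def by (rule is_ideal_ideal_gen)

lemma mult_mem_ideal_mult: "a \<in> I \<Longrightarrow> b \<in> J \<Longrightarrow> a * b \<in> ideal_mult I J"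
  unfolding ideal_mult_def by (rule subsetD[OF ideal_gen_subset]) blast

lemma ideal_mult_least:
  "is_ideal K \<Longrightarrow> (\<And>a b. a \<in> I \<Longrightarrow> b \<in> J \<Longrightarrow> a * b \<in> K) \<Longrightarrow> ideal_mult I J \<subseteq> K"
  unfolding ideal_mult_def by (rule ideal_gen_least) blast+

lemma ideal_mult_mono: "I \<subseteq> I' \<Longrightarrow> J \<subseteq> J' \<Longrightarrow> ideal_mult I J \<subseteq> ideal_mult I' J'"
  by (rule ideal_mult_least[OF is_ideal_ideal_mult]) (blast intro: mult_mem_ideal_mult)

lemma nonzerodivisor_cancel: "nonzerodivisor d \<Longrightarrow> d * x = d * y \<Longrightarrow> x = y"
  unfolding nonzerodivisor_def by (metis eq_iff_diff_eq_0 right_diff_distrib)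

lemma invertible_ideal_gen_of_prufer:
  fixes t :: "'a::comm_ring_1"
  assumes "prufer_ring TYPE('a)" "finite S" "t \<in> S" "nonzerodivisor t"
  obtains M d where "nonzerodivisor d" "ideal_mult (ideal_gen S) M = principal d"
proof -
  have "regular_ideal (ideal_gen S)"
    unfolding regular_ideal_def using assms(3,4) is_ideal_ideal_gen ideal_gen_subset by blast
  moreover have "fin_gen_ideal (ideal_gen S)"
    unfolding fin_gen_ideal_def using assms(2) by blast
  ultimately have "invertible_ideal (ideal_gen S)"
    using assms(1) unfolding prufer_ring_def by blast
  then show ?thesis
    using that unfolding invertible_ideal_def by blast
qed

lemma mult_eq_multiple_of_ideal_mult:
  "ideal_mult I M = principal d \<Longrightarrow> a \<in> I \<Longrightarrow> m \<in> M \<Longrightarrow> \<exists>c. a * m = d * c"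
  using mult_mem_ideal_mult[of a I m M] by auto

text \<open>Since \<open>d \<in> IM\<close>, the hypothesis gives \<open>d x \<in> IMx \<subseteq> dK\<close>; then cancel \<open>d\<close>.\<close>

lemma mem_of_invertible_multiples:
  assumes inv: "ideal_mult (ideal_gen S) M = principal d" and d: "nonzerodivisor d"
    and K: "is_ideal K" and multiples: "\<And>a m. a \<in> S \<Longrightarrow> m \<in> M \<Longrightarrow> a * m * x \<in> (*) d ` K"
  shows "x \<in> K"
proof -
  let ?C = "(\<lambda>z. z * x) -` ((*) d ` K)"
  have C: "is_ideal ?C"
    by (rule is_ideal_vimage_mult[OF is_ideal_scaled[OF K]])
  have "ideal_gen S \<subseteq> ideal_colon ?C M"
    using multiples
    by (intro ideal_gen_least[OF is_ideal_ideal_colon[OF C]]) (auto simp: ideal_colon_def)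
  then have "ideal_mult (ideal_gen S) M \<subseteq> ?C"
    by (intro ideal_mult_least[OF C]) (auto simp: ideal_colon_def)
  moreover have "d \<in> principal d"
    by (metis (mono_tags) mem_Collect_eq mult_1_right)
  ultimately obtain k where "d * x = d * k" "k \<in> K"
    using inv by auto
  then show ?thesis
    using nonzerodivisor_cancel[OF d] by metis
qed

lemma ideal_mult_times_inverse_subset:
  assumes inv: "ideal_mult I M = principal d" and J: "is_ideal J" and m: "m \<in> M"
  shows "ideal_mult I J \<subseteq> (\<lambda>u. u * m) -` ((*) d ` J)"
proof (rule ideal_mult_least[OF is_ideal_vimage_mult[OF is_ideal_scaled[OF J]]])
  fix a b assume a: "a \<in> I" and b: "b \<in> J"
  obtain c where "a * m = d * c"
    using mult_eq_multiple_of_ideal_mult[OF inv a m] by blast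
  then have "a * b * m = d * (c * b)"
    by (metis mult.assoc mult.commute)
  moreover have "c * b \<in> J"
    using J b by (rule ideal_closed_mult_left)
  ultimately show "a * b \<in> (\<lambda>u. u * m) -` ((*) d ` J)"
    by simp
qed

lemma invertible_ideal_mult_inter:
  assumes I: "is_ideal I" and inv: "ideal_mult I M = principal d" and d: "nonzerodivisor d"
    and J: "is_ideal J" and L: "is_ideal L"
  shows "ideal_mult I J \<inter> ideal_mult I L \<subseteq> ideal_mult I (J \<inter> L)"
proof
  fix u assume u: "u \<in> ideal_mult I J \<inter> ideal_mult I L"
  have inv': "ideal_mult (ideal_gen I) M = principal d"
    using inv ideal_gen_idem[OF I] by simp
  show "u \<in> ideal_mult I (J \<inter> L)"
  proof (rule mem_of_invertible_multiples[OF inv' d is_ideal_ideal_mult])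
    fix a m assume a: "a \<in> I" and m: "m \<in> M"
    obtain w1 w2 where w: "u * m = d * w1" "w1 \<in> J" "u * m = d * w2" "w2 \<in> L"
      using u ideal_mult_times_inverse_subset[OF inv J m] ideal_mult_times_inverse_subset[OF inv L m]
      by blast
    then have "w1 \<in> J \<inter> L"
      using nonzerodivisor_cancel[OF d, of w1 w2] by simp
    then have "a * w1 \<in> ideal_mult I (J \<inter> L)"
      using a by (intro mult_mem_ideal_mult)
    moreover have "a * m * u = d * (a * w1)"
      using w(1) by (metis mult.assoc mult.commute mult.left_commute)
    ultimately show "a * m * u \<in> (*) d ` ideal_mult I (J \<inter> L)"
      by blast
  qed
qed

lemma invertible_mem_ideal_mult_colon:
  assumes I: "is_ideal I" and inv: "ideal_mult I M = principal d" and d: "nonzerodivisor d"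
    and s: "s \<in> I"
  shows "s \<in> ideal_mult I (ideal_colon (principal s) I)"
proof -
  have inv': "ideal_mult (ideal_gen I) M = principal d"
    using inv ideal_gen_idem[OF I] by simp
  show ?thesis
  proof (rule mem_of_invertible_multiples[OF inv' d is_ideal_ideal_mult])
    fix a m assume a: "a \<in> I" and m: "m \<in> M"
    obtain \<beta> where \<beta>: "s * m = d * \<beta>"
      using mult_eq_multiple_of_ideal_mult[OF inv s m] by blast
    have "\<beta> * q \<in> principal s" if q: "q \<in> I" for q
    proof -
      obtain \<gamma> where \<gamma>: "q * m = d * \<gamma>"
        using mult_eq_multiple_of_ideal_mult[OF inv q m] by blast
      have "d * (\<beta> * q) = d * (s * \<gamma>)"
        by (metis \<beta> \<gamma> mult.assoc mult.commute)
      then show ?thesis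
        using nonzerodivisor_cancel[OF d] by blast
    qed
    then have "a * \<beta> \<in> ideal_mult I (ideal_colon (principal s) I)"
      using a unfolding ideal_colon_def by (intro mult_mem_ideal_mult) auto
    moreover have "a * m * s = d * (a * \<beta>)"
      using \<beta> by (metis mult.assoc mult.commute mult.left_commute)
    ultimately show "a * m * s \<in> (*) d ` ideal_mult I (ideal_colon (principal s) I)"
      by blast
  qed
qed

lemma invertible_ideal_if_mem_ideal_mult_colon:
  assumes I: "is_ideal I" and s: "nonzerodivisor s"
    and mem: "s \<in> ideal_mult I (ideal_colon (principal s) I)"
  shows "invertible_ideal I"
proof -
  let ?J = "ideal_colon (principal s) I"
  have "ideal_mult I ?J \<subseteq> principal s"
  proof (rule ideal_mult_least[OF is_ideal_principal])
    fix a b assume "a \<in> I" "b \<in> ?J"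
    then have "b * a \<in> principal s"
      unfolding ideal_colon_def by blast
    then show "a * b \<in> principal s"
      by (simp add: mult.commute)
  qed
  moreover have "principal s \<subseteq> ideal_mult I ?J"
    using ideal_closed_mult_right[OF is_ideal_ideal_mult mem] by blast
  ultimately show ?thesis
    unfolding invertible_ideal_def using I s is_ideal_ideal_colon[OF is_ideal_principal] by blast
qed

lemma ideal_mult_finite_gen:
  assumes "u \<in> ideal_mult I J"
  shows "\<exists>S. finite S \<and> S \<subseteq> I \<and> u \<in> ideal_mult (ideal_gen S) J"
proof -
  let ?F = "{u. \<exists>S. finite S \<and> S \<subseteq> I \<and> u \<in> ideal_mult (ideal_gen S) J}"
  have "is_ideal ?F"
  proof (rule is_idealI)
    have "0 \<in> ideal_mult (ideal_gen {}) J"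
      by (rule ideal_closed_zero[OF is_ideal_ideal_mult])
    then show "0 \<in> ?F"
      by blast
  next
    fix x y assume "x \<in> ?F" "y \<in> ?F"
    then obtain S T where S: "finite S" "S \<subseteq> I" "x \<in> ideal_mult (ideal_gen S) J"
      and T: "finite T" "T \<subseteq> I" "y \<in> ideal_mult (ideal_gen T) J"
      by blast
    have "ideal_mult (ideal_gen S) J \<subseteq> ideal_mult (ideal_gen (S \<union> T)) J"
      "ideal_mult (ideal_gen T) J \<subseteq> ideal_mult (ideal_gen (S \<union> T)) J"
      by (intro ideal_mult_mono ideal_gen_mono order_refl; blast)+
    then have "x + y \<in> ideal_mult (ideal_gen (S \<union> T)) J"
      using S(3) T(3) by (blast intro: ideal_closed_add[OF is_ideal_ideal_mult])
    then show "x + y \<in> ?F"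
      using S T by blast
  next
    fix r x assume "x \<in> ?F"
    then show "r * x \<in> ?F"
      using ideal_closed_mult_left[OF is_ideal_ideal_mult] by blast
  qed
  moreover have "a * b \<in> ?F" if "a \<in> I" "b \<in> J" for a b
  proof -
    have "a * b \<in> ideal_mult (ideal_gen {a}) J"
      using that(2) ideal_gen_subset by (blast intro: mult_mem_ideal_mult)
    then show ?thesis
      using that(1) by blast
  qed
  ultimately show ?thesis
    using ideal_mult_least[of ?F I J] assms by blast
qed

lemma prufer_ideal_mult_inter:
  fixes I :: "'a::comm_ring_1 set"
  assumes prufer: "prufer_ring TYPE('a)" and I: "regular_ideal I"
    and J: "is_ideal J" and L: "is_ideal L"
  shows "ideal_mult I J \<inter> ideal_mult I L \<subseteq> ideal_mult I (J \<inter> L)"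
proof
  fix u assume u: "u \<in> ideal_mult I J \<inter> ideal_mult I L"
  obtain S where S: "finite S" "S \<subseteq> I" "u \<in> ideal_mult (ideal_gen S) J"
    using ideal_mult_finite_gen[OF IntD1[OF u]] by blast
  obtain T where T: "finite T" "T \<subseteq> I" "u \<in> ideal_mult (ideal_gen T) L"
    using ideal_mult_finite_gen[OF IntD2[OF u]] by blast
  obtain t where t: "t \<in> I" "nonzerodivisor t"
    using I unfolding regular_ideal_def by blast
  define G where "G = ideal_gen (insert t (S \<union> T))"
  have "finite (insert t (S \<union> T))"
    using S(1) T(1) by simp
  then obtain M d where d: "nonzerodivisor d" and inv: "ideal_mult G M = principal d"
    unfolding G_def by (rule invertible_ideal_gen_of_prufer[OF prufer _ insertI1 t(2)])
  have "ideal_mult (ideal_gen S) J \<subseteq> ideal_mult G J" "ideal_mult (ideal_gen T) L \<subseteq> ideal_mult G L"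
    unfolding G_def by (intro ideal_mult_mono ideal_gen_mono order_refl; blast)+
  then have "u \<in> ideal_mult G J \<inter> ideal_mult G L"
    using S(3) T(3) by blast
  then have "u \<in> ideal_mult G (J \<inter> L)"
    using invertible_ideal_mult_inter[OF is_ideal_ideal_gen[of "insert t (S \<union> T)"], folded G_def,
        OF inv d J L] by blast
  moreover have "G \<subseteq> I"
    unfolding G_def using I S(2) T(2) t(1) unfolding regular_ideal_def
    by (intro ideal_gen_least) blast+
  then have "ideal_mult G (J \<inter> L) \<subseteq> ideal_mult I (J \<inter> L)"
    by (rule ideal_mult_mono[OF _ order_refl])
  ultimately show "u \<in> ideal_mult I (J \<inter> L)"
    by blast
qed

text \<open>
  For \<open>x = j + l\<close> with \<open>j \<in> Y\<close>, \<open>l \<in> Z\<close> invert \<open>(j, l, t)\<close>, \<open>t \<in> Z\<close> regular. Writing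
  \<open>m x = d c\<close> and \<open>g m = d \<gamma>\<close>, cancelling \<open>d\<close> gives \<open>\<gamma> x = c g\<close>, which lies in \<open>X \<inter> Y\<close> for
  \<open>g = j\<close> and in \<open>X \<inter> Z\<close> for \<open>g \<in> {l, t}\<close>.
\<close>

lemma prufer_inter_ideal_sum_subset:
  fixes X :: "'a::comm_ring_1 set"
  assumes prufer: "prufer_ring TYPE('a)" and X: "is_ideal X" and Y: "is_ideal Y"
    and Z: "regular_ideal Z"
  shows "X \<inter> ideal_sum Y Z \<subseteq> ideal_sum (X \<inter> Y) (X \<inter> Z)"
proof
  fix x assume "x \<in> X \<inter> ideal_sum Y Z"
  then obtain j l where x: "x \<in> X" "x = j + l" and j: "j \<in> Y" and l: "l \<in> Z"
    unfolding ideal_sum_def by blast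
  have Z': "is_ideal Z"
    using Z unfolding regular_ideal_def by blast
  obtain t where t: "t \<in> Z" "nonzerodivisor t"
    using Z unfolding regular_ideal_def by blast
  have "finite {j, l, t}" "t \<in> {j, l, t}"
    by simp_all
  then obtain M d where d: "nonzerodivisor d" and inv: "ideal_mult (ideal_gen {j, l, t}) M = principal d"
    by (rule invertible_ideal_gen_of_prufer[OF prufer _ _ t(2)])
  let ?W = "ideal_sum (X \<inter> Y) (X \<inter> Z)"
  have XY: "is_ideal (X \<inter> Y)" and XZ: "is_ideal (X \<inter> Z)"
    using X Y Z' by (simp_all add: is_ideal_inter)
  have gens: "{j, l, t} \<subseteq> ideal_gen {j, l, t}"
    by (rule ideal_gen_subset)
  have multiple: "\<exists>c. a * m = d * c" if "a \<in> {j, l, t}" "m \<in> M" for a m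
    by (rule mult_eq_multiple_of_ideal_mult[OF inv subsetD[OF gens that(1)] that(2)])
  show "x \<in> ?W"
  proof (rule mem_of_invertible_multiples[OF inv d is_ideal_ideal_sum[OF XY XZ]])
    fix g m assume g: "g \<in> {j, l, t}" and m: "m \<in> M"
    obtain \<beta> \<alpha> \<gamma> where \<beta>: "j * m = d * \<beta>" and \<alpha>: "l * m = d * \<alpha>" and \<gamma>: "g * m = d * \<gamma>"
      using multiple[of j m] multiple[of l m] multiple[OF g m] m by auto
    have mx: "m * x = d * (\<beta> + \<alpha>)"
      using \<alpha> \<beta> x(2) by (simp add: algebra_simps)
    have "d * (\<gamma> * x) = g * (m * x)"
      using \<gamma> by (simp add: mult.assoc[symmetric])
    also have "\<dots> = d * ((\<beta> + \<alpha>) * g)"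
      using mx by (simp add: ac_simps)
    finally have \<gamma>x: "\<gamma> * x = (\<beta> + \<alpha>) * g"
      by (rule nonzerodivisor_cancel[OF d])
    have "\<gamma> * x \<in> X"
      using X x(1) by (rule ideal_closed_mult_left)
    moreover have "(\<beta> + \<alpha>) * g \<in> Y \<or> (\<beta> + \<alpha>) * g \<in> Z"
      using g ideal_closed_mult_left[OF Y j] ideal_closed_mult_left[OF Z' l]
        ideal_closed_mult_left[OF Z' t(1)] by blast
    ultimately have "\<gamma> * x \<in> X \<inter> Y \<or> \<gamma> * x \<in> X \<inter> Z"
      by (simp add: \<gamma>x)
    then have "\<gamma> * x \<in> ?W"
      using ideal_sum_upper_left[OF XZ] ideal_sum_upper_right[OF XY] by (meson subsetD)
    moreover have "g * m * x = d * (\<gamma> * x)"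
      using \<gamma> by (simp add: mult.assoc)
    ultimately show "g * m * x \<in> (*) d ` ?W"
      by blast
  qed
qed

lemma prufer_ideal_mult_inter_ideal_sum:
  fixes I :: "'a::comm_ring_1 set"
  assumes prufer: "prufer_ring TYPE('a)" and I: "regular_ideal I" and K: "regular_ideal K"
    and J: "is_ideal J" and L: "is_ideal L"
  shows "ideal_mult I J \<inter> ideal_sum (ideal_mult I L) K \<subseteq> ideal_sum (ideal_mult I (J \<inter> L)) K"
proof -
  have "ideal_mult I J \<inter> ideal_sum (ideal_mult I L) K
      \<subseteq> ideal_sum (ideal_mult I J \<inter> ideal_mult I L) (ideal_mult I J \<inter> K)"
    by (rule prufer_inter_ideal_sum_subset[OF prufer is_ideal_ideal_mult is_ideal_ideal_mult K])
  also have "\<dots> \<subseteq> ideal_sum (ideal_mult I (J \<inter> L)) K"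
    by (intro ideal_sum_mono prufer_ideal_mult_inter[OF prufer I J L]) blast
  finally show ?thesis .
qed

lemma ring_hom_fun_add: "ring_hom_fun f \<Longrightarrow> f (x + y) = f x + f y"
  unfolding ring_hom_fun_def by blast

lemma ring_hom_fun_mult: "ring_hom_fun f \<Longrightarrow> f (x * y) = f x * f y"
  unfolding ring_hom_fun_def by blast

lemma ring_hom_fun_zero: "ring_hom_fun f \<Longrightarrow> f 0 = 0"
  using ring_hom_fun_add[of f 0 0] by simp

lemma ring_hom_fun_diff: "ring_hom_fun f \<Longrightarrow> f (x - y) = f x - f y"
  using ring_hom_fun_add[of f "x - y" y] by (simp add: eq_diff_eq)

lemma is_ideal_vimage_hom:
  assumes f: "ring_hom_fun f" and a: "is_ideal a"
  shows "is_ideal (f -` a)"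
  using a by (intro is_idealI)
    (simp_all add: ring_hom_fun_zero[OF f] ring_hom_fun_add[OF f] ring_hom_fun_mult[OF f]
      ideal_closed_zero ideal_closed_add ideal_closed_mult_left)

lemma is_ideal_image_hom:
  assumes f: "ring_hom_fun f" and surj: "surj f" and I: "is_ideal I"
  shows "is_ideal (f ` I)"
proof (rule is_idealI)
  show "0 \<in> f ` I"
    using ideal_closed_zero[OF I] ring_hom_fun_zero[OF f] by (metis image_eqI)
next
  fix x y assume "x \<in> f ` I" "y \<in> f ` I"
  then obtain x' y' where "x = f x'" "y = f y'" "x' \<in> I" "y' \<in> I"
    by blast
  then have "x + y = f (x' + y')" "x' + y' \<in> I"
    using ring_hom_fun_add[OF f] ideal_closed_add[OF I] by simp_all
  then show "x + y \<in> f ` I"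
    by blast
next
  fix r x assume "x \<in> f ` I"
  then obtain x' where "x = f x'" "x' \<in> I"
    by blast
  moreover obtain r' where "r = f r'"
    using surj by (metis surjD)
  ultimately have "r * x = f (r' * x')" "r' * x' \<in> I"
    using ring_hom_fun_mult[OF f] ideal_closed_mult_left[OF I] by simp_all
  then show "r * x \<in> f ` I"
    by blast
qed

lemma image_ideal_gen:
  assumes f: "ring_hom_fun f" and surj: "surj f"
  shows "f ` ideal_gen S = ideal_gen (f ` S)"
proof
  have "ideal_gen S \<subseteq> f -` ideal_gen (f ` S)"
    using ideal_gen_subset[of "f ` S"]
    by (intro ideal_gen_least[OF is_ideal_vimage_hom[OF f is_ideal_ideal_gen]]) blast
  then show "f ` ideal_gen S \<subseteq> ideal_gen (f ` S)"
    by blast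
  show "ideal_gen (f ` S) \<subseteq> f ` ideal_gen S"
    using ideal_gen_subset[of S]
    by (intro ideal_gen_least[OF is_ideal_image_hom[OF f surj is_ideal_ideal_gen]]) blast
qed

lemma image_ideal_mult_subset:
  assumes f: "ring_hom_fun f"
  shows "f ` ideal_mult I J \<subseteq> ideal_mult (f ` I) (f ` J)"
proof -
  have "ideal_mult I J \<subseteq> f -` ideal_mult (f ` I) (f ` J)"
  proof (rule ideal_mult_least[OF is_ideal_vimage_hom[OF f is_ideal_ideal_mult]])
    fix a b assume "a \<in> I" "b \<in> J"
    then show "a * b \<in> f -` ideal_mult (f ` I) (f ` J)"
      by (simp add: ring_hom_fun_mult[OF f] mult_mem_ideal_mult)
  qed
  then show ?thesis
    by blast
qed

lemma ideal_mult_subset_image_vimage: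
  assumes f: "ring_hom_fun f" and surj: "surj f"
  shows "ideal_mult a b \<subseteq> f ` ideal_mult (f -` a) (f -` b)"
proof (rule ideal_mult_least[OF is_ideal_image_hom[OF f surj is_ideal_ideal_mult]])
  fix x y assume "x \<in> a" "y \<in> b"
  moreover obtain p q where "x = f p" "y = f q"
    using surj by (metis surjD)
  ultimately have "p * q \<in> ideal_mult (f -` a) (f -` b)" "x * y = f (p * q)"
    by (simp_all add: mult_mem_ideal_mult ring_hom_fun_mult[OF f])
  then show "x * y \<in> f ` ideal_mult (f -` a) (f -` b)"
    by blast
qed

lemma image_ideal_colon_subset:
  assumes f: "ring_hom_fun f"
  shows "f ` ideal_colon (principal s) I \<subseteq> ideal_colon (principal (f s)) (f ` I)"
proof (clarsimp simp: ideal_colon_def)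
  fix b q assume b: "\<forall>q\<in>I. \<exists>r. b * q = s * r" and q: "q \<in> I"
  then obtain r where "b * q = s * r"
    by blast
  then have "f b * f q = f s * f r"
    by (metis ring_hom_fun_mult[OF f])
  then show "\<exists>r. f b * f q = f s * r"
    by blast
qed

lemma regular_ideal_vimage:
  assumes f: "ring_hom_fun f" and ker: "regular_ideal {x. f x = 0}" and a: "is_ideal a"
  shows "regular_ideal (f -` a)"
  using ker is_ideal_vimage_hom[OF f a] ideal_closed_zero[OF a]
  unfolding regular_ideal_def by force

lemma ideal_mult_inter_of_prufer_quotient:
  fixes \<phi> :: "'a::comm_ring_1 \<Rightarrow> 'b::comm_ring_1" and a b c :: "'b set"
  assumes hom: "ring_hom_fun \<phi>" and surj: "surj \<phi>" and prufer: "prufer_ring TYPE('a)"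
    and ker: "regular_ideal {x. \<phi> x = 0}"
    and a: "is_ideal a" and b: "is_ideal b" and c: "is_ideal c"
  shows "ideal_mult a b \<inter> ideal_mult a c \<subseteq> ideal_mult a (b \<inter> c)"
proof
  fix y assume y: "y \<in> ideal_mult a b \<inter> ideal_mult a c"
  obtain u where u: "u \<in> ideal_mult (\<phi> -` a) (\<phi> -` b)" "\<phi> u = y"
    using subsetD[OF ideal_mult_subset_image_vimage[OF hom surj] IntD1[OF y]] by blast
  obtain v where v: "v \<in> ideal_mult (\<phi> -` a) (\<phi> -` c)" "\<phi> v = y"
    using subsetD[OF ideal_mult_subset_image_vimage[OF hom surj] IntD2[OF y]] by blast
  have "u = v + (u - v)" "u - v \<in> {x. \<phi> x = 0}"
    using u(2) v(2) ring_hom_fun_diff[OF hom] by simp_all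
  then have "u \<in> ideal_sum (ideal_mult (\<phi> -` a) (\<phi> -` c)) {x. \<phi> x = 0}"
    using v(1) unfolding ideal_sum_def by blast
  then have "u \<in> ideal_sum (ideal_mult (\<phi> -` a) (\<phi> -` b \<inter> \<phi> -` c)) {x. \<phi> x = 0}"
    using prufer_ideal_mult_inter_ideal_sum[OF prufer regular_ideal_vimage[OF hom ker a] ker
        is_ideal_vimage_hom[OF hom b] is_ideal_vimage_hom[OF hom c]] u(1) by blast
  then obtain w k where w: "w \<in> ideal_mult (\<phi> -` a) (\<phi> -` (b \<inter> c))" and "\<phi> k = 0" "u = w + k"
    unfolding ideal_sum_def by auto
  then have "y = \<phi> w"
    using u(2) ring_hom_fun_add[OF hom] by simp
  moreover have "\<phi> ` ideal_mult (\<phi> -` a) (\<phi> -` (b \<inter> c)) \<subseteq> ideal_mult a (b \<inter> c)"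
    using image_ideal_mult_subset[OF hom] ideal_mult_mono[of "\<phi> ` \<phi> -` a" a "\<phi> ` \<phi> -` (b \<inter> c)" "b \<inter> c"]
    by blast
  ultimately show "y \<in> ideal_mult a (b \<inter> c)"
    using w by blast
qed

lemma prufer_ring_of_prufer_quotient:
  fixes \<phi> :: "'a::comm_ring_1 \<Rightarrow> 'b::comm_ring_1"
  assumes hom: "ring_hom_fun \<phi>" and surj: "surj \<phi>" and prufer: "prufer_ring TYPE('a)"
    and ker: "regular_ideal {x. \<phi> x = 0}"
  shows "prufer_ring TYPE('b)"
  unfolding prufer_ring_def
proof (intro allI impI)
  fix a :: "'b set" assume "regular_ideal a \<and> fin_gen_ideal a"
  then obtain s T where s: "s \<in> a" "nonzerodivisor s" and T: "finite T" "a = ideal_gen T"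
    unfolding regular_ideal_def fin_gen_ideal_def by blast
  obtain t where t: "\<phi> t = 0" "nonzerodivisor t"
    using ker unfolding regular_ideal_def by blast
  have "T \<subseteq> \<phi> ` UNIV"
    using surj by simp
  then obtain S where S: "finite S" "T = \<phi> ` S"
    using finite_subset_image[OF T(1)] by blast
  define I where "I = ideal_gen (insert t S)"
  have I_a: "\<phi> ` I = a"
    unfolding I_def image_ideal_gen[OF hom surj] using S(2) T(2) t(1) ideal_gen_insert_zero by simp
  then obtain s' where s': "s' \<in> I" "\<phi> s' = s"
    using s(1) by blast
  have "finite (insert t S)"
    using S(1) by simp
  then obtain M d where d: "nonzerodivisor d" and inv: "ideal_mult I M = principal d"
    unfolding I_def by (rule invertible_ideal_gen_of_prufer[OF prufer _ insertI1 t(2)])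
  let ?Q = "ideal_colon (principal s') I"
  have "s' \<in> ideal_mult I ?Q"
    using invertible_mem_ideal_mult_colon[OF _ inv d s'(1)] is_ideal_ideal_gen unfolding I_def
    by blast
  then have "s \<in> \<phi> ` ideal_mult I ?Q"
    using s'(2) by blast
  also have "\<dots> \<subseteq> ideal_mult (\<phi> ` I) (\<phi> ` ?Q)"
    by (rule image_ideal_mult_subset[OF hom])
  also have "\<dots> \<subseteq> ideal_mult a (ideal_colon (principal s) a)"
    using image_ideal_colon_subset[OF hom, of s' I] unfolding I_a s'(2)
    by (rule ideal_mult_mono[OF order_refl])
  finally show "invertible_ideal a"
    by (rule invertible_ideal_if_mem_ideal_mult_colon[OF is_ideal_ideal_gen[of T, folded T(2)] s(2)])
qed

theorem proposition4p4:
  fixes \<phi> :: "'a::comm_ring_1 \<Rightarrow> 'b::comm_ring_1"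
  assumes "ring_hom_fun \<phi>" and "surj \<phi>"
    and "prufer_ring TYPE('a)"
    and "regular_ideal {x. \<phi> x = 0}"
  shows "(\<forall>\<aa> \<bb> \<cc> :: 'b set. is_ideal \<aa> \<and> is_ideal \<bb> \<and> is_ideal \<cc> \<longrightarrow>
            ideal_mult \<aa> (\<bb> \<inter> \<cc>) = ideal_mult \<aa> \<bb> \<inter> ideal_mult \<aa> \<cc>)
         \<and> prufer_ring TYPE('b)"
proof (intro conjI allI impI)
  fix \<aa> \<bb> \<cc> :: "'b set" assume "is_ideal \<aa> \<and> is_ideal \<bb> \<and> is_ideal \<cc>"
  then have "ideal_mult \<aa> \<bb> \<inter> ideal_mult \<aa> \<cc> \<subseteq> ideal_mult \<aa> (\<bb> \<inter> \<cc>)"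
    using ideal_mult_inter_of_prufer_quotient[OF assms] by blast
  moreover have "ideal_mult \<aa> (\<bb> \<inter> \<cc>) \<subseteq> ideal_mult \<aa> \<bb> \<inter> ideal_mult \<aa> \<cc>"
    using ideal_mult_mono[OF order_refl, of "\<bb> \<inter> \<cc>"] by blast
  ultimately show "ideal_mult \<aa> (\<bb> \<inter> \<cc>) = ideal_mult \<aa> \<bb> \<inter> ideal_mult \<aa> \<cc>"
    by (rule subset_antisym[rotated])
next
  show "prufer_ring TYPE('b)"
    by (rule prufer_ring_of_prufer_quotient[OF assms])
qed

end
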